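(* Let $\lambda\in\mathbb{R}^n$ and $k\le n-1$. Then the vector $v\in\mathbb{R}^n$ with $v_i=e^k_{n-1}(\lambda_{\hat i})$ can be computed using $O(kn\log n)$ arithmetic operations.
   Context: $e^k_m(x_1,\dots,x_m)=\sum_{S\subseteq[m],|S|=k}\prod_{i\in S}x_i$ is the elementary symmetric polynomial, and $\lambda_{\hat i}\in\mathbb{R}^{n-1}$ is the vector obtained from $\lambda$ by deleting its $i$-th entry. *)

theory Defs
  imports Complex_Main
begin

definition esym :: "nat \<Rightarrow> real list \<Rightarrow> real" where
  "esym k xs = (\<Sum>S\<in>{S. S \<subseteq> {..<length xs} \<and> card S = k}. \<Prod>i\<in>S. xs ! i)"

definition del_entry :: "nat \<Rightarrow> 'a list \<Rightarrow> 'a list" where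
  "del_entry i xs = take i xs @ drop (Suc i) xs"

text \<open>Model of computation: straight-line arithmetic programs (arithmetic circuits).
  Memory initially holds the n inputs; each instruction appends one new value computed
  from earlier memory cells.  Real constants are free; each addition, subtraction and
  multiplication costs one arithmetic operation.\<close>
datatype instr = Const real | Add nat nat | Sub nat nat | Mul nat nat

fun step :: "real list \<Rightarrow> instr \<Rightarrow> real" where
  "step mem (Const c) = c"
| "step mem (Add a b) = mem ! a + mem ! b"
| "step mem (Sub a b) = mem ! a - mem ! b"
| "step mem (Mul a b) = mem ! a * mem ! b"

fun exec :: "real list \<Rightarrow> instr list \<Rightarrow> real list" where
  "exec mem [] = mem"
| "exec mem (ins # p) = exec (mem @ [step mem ins]) p"

fun args :: "instr \<Rightarrow> nat set" where
  "args (Const c) = {}"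
| "args (Add a b) = {a, b}"
| "args (Sub a b) = {a, b}"
| "args (Mul a b) = {a, b}"

fun is_arith :: "instr \<Rightarrow> bool" where
  "is_arith (Const c) = False"
| "is_arith _ = True"

definition wf_slp :: "nat \<Rightarrow> instr list \<Rightarrow> nat list \<Rightarrow> bool" where
  "wf_slp n p out \<longleftrightarrow> (\<forall>j<length p. \<forall>a\<in>args (p ! j). a < n + j)
                     \<and> (\<forall>c\<in>set out. c < n + length p)"

definition cost :: "instr list \<Rightarrow> nat" where
  "cost p = length (filter is_arith p)"

definition computes :: "nat \<Rightarrow> instr list \<Rightarrow> nat list \<Rightarrow> (real list \<Rightarrow> real list) \<Rightarrow> bool" where
  "computes n p out f \<longleftrightarrow> wf_slp n p out \<and>
     (\<forall>xs. length xs = n \<longrightarrow> map (\<lambda>c. exec xs p ! c) out = f xs)"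

end

theory Submission
  imports Defs "HOL-Computational_Algebra.Polynomial"
begin

text \<open>For \<open>j \<le> k\<close>, \<open>e\<^sup>j\<^sub>n\<^sub>-\<^sub>1(\<lambda>\<^sub>\<hat>\<^sub>i)\<close> is the coefficient of \<open>t\<^sup>j\<close> in \<open>P(t) / (1 + \<lambda>\<^sub>i t)\<close>, where
  \<open>P(t) = (1 + \<lambda>\<^sub>1 t) \<cdots> (1 + \<lambda>\<^sub>n t)\<close>.  The coefficients of \<open>P\<close> up to degree \<open>k\<close> are obtained
  by multiplying in the linear factors one at a time, with \<open>2k\<close> operations per factor;
  dividing out \<open>1 + \<lambda>\<^sub>i t\<close> again is the recurrence \<open>c\<^sub>j = p\<^sub>j - \<lambda>\<^sub>i c\<^sub>j\<^sub>-\<^sub>1\<close> on the coefficients \<open>p\<^sub>j\<close> of \<open>P\<close>,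
  another \<open>2k\<close> operations for each \<open>i\<close>.  In total this takes \<open>4kn\<close> operations, within \<open>O(kn log n)\<close>.\<close>

lemma length_exec [simp]: "length (exec mem p) = length mem + length p"
  by (induction p arbitrary: mem) auto

lemma exec_nth_input: "i < length mem \<Longrightarrow> exec mem p ! i = mem ! i"
  by (induction p arbitrary: mem) (auto simp: nth_append)

lemma step_cong: "(\<And>a. a \<in> args ins \<Longrightarrow> m ! a = m' ! a) \<Longrightarrow> step m ins = step m' ins"
  by (cases ins) auto

lemma exec_nth_computed:
  assumes "\<forall>j<length p. \<forall>a\<in>args (p ! j). a < length mem + j" and "t < length p"
  shows "exec mem p ! (length mem + t) = step (exec mem p) (p ! t)"
  using assms
proof (induction p arbitrary: mem t)
  case Nil
  then show ?case by simp
next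
  case (Cons ins p)
  let ?mem' = "mem @ [step mem ins]"
  show ?case
  proof (cases t)
    case 0
    have "step mem ins = step (exec ?mem' p) ins"
    proof (rule step_cong)
      fix a assume "a \<in> args ins"
      then have "a < length mem"
        using Cons.prems(1)[THEN spec[of _ 0]] by simp
      then show "mem ! a = exec ?mem' p ! a"
        by (simp add: exec_nth_input nth_append)
    qed
    then show ?thesis
      using 0 by (simp add: exec_nth_input)
  next
    case (Suc t')
    have "\<forall>j<length p. \<forall>a\<in>args (p ! j). a < length ?mem' + j"
      using Cons.prems(1) by force
    then have "exec ?mem' p ! (length ?mem' + t') = step (exec ?mem' p) (p ! t')"
      using Cons.prems(2) Suc by (intro Cons.IH) auto
    then show ?thesis
      using Suc by simp
  qed
qed

definition grid_prog :: "nat \<Rightarrow> nat \<Rightarrow> (nat \<Rightarrow> nat \<Rightarrow> instr) \<Rightarrow> instr list" where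
  "grid_prog rows B f = map (\<lambda>t. f (t div B) (t mod B)) [0..<rows * B]"

lemma grid_index_less:
  fixes b r rows B :: nat
  assumes "b < rows" and "r < B"
  shows "b * B + r < rows * B"
proof -
  have "b * B + r < Suc b * B" using assms(2) by simp
  also have "\<dots> \<le> rows * B" using assms(1) by (intro mult_le_mono1) simp
  finally show ?thesis .
qed

lemma length_grid_prog [simp]: "length (grid_prog rows B f) = rows * B"
  by (simp add: grid_prog_def)

lemma grid_prog_nth: "b < rows \<Longrightarrow> r < B \<Longrightarrow> grid_prog rows B f ! (b * B + r) = f b r"
  by (simp add: grid_prog_def grid_index_less)

definition grid_cell :: "nat \<Rightarrow> nat \<Rightarrow> nat \<Rightarrow> nat \<Rightarrow> nat" where
  "grid_cell n B b r = n + (b * B + r)"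

lemma grid_prog_args_less:
  assumes "\<And>b r a. b < rows \<Longrightarrow> r < B \<Longrightarrow> a \<in> args (f b r) \<Longrightarrow> a < grid_cell n B b r"
  shows "\<forall>t<length (grid_prog rows B f). \<forall>a\<in>args (grid_prog rows B f ! t). a < n + t"
proof (intro allI impI ballI)
  fix t a
  assume t: "t < length (grid_prog rows B f)" and a: "a \<in> args (grid_prog rows B f ! t)"
  have "0 < B"
    using t by (cases "B = 0") auto
  then have "t div B < rows" "t mod B < B"
    using t by (simp_all add: less_mult_imp_div_less)
  moreover have "grid_prog rows B f ! t = f (t div B) (t mod B)"
    using t by (simp add: grid_prog_def)
  ultimately show "a < n + t"
    using assms a by (fastforce simp: grid_cell_def)
qed

lemma exec_grid_prog_cell:
  assumes "\<And>b r a. b < rows \<Longrightarrow> r < B \<Longrightarrow> a \<in> args (f b r) \<Longrightarrow> a < grid_cell n B b r"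
    and "length mem = n" "b < rows" "r < B"
  shows "exec mem (grid_prog rows B f) ! grid_cell n B b r = step (exec mem (grid_prog rows B f)) (f b r)"
proof -
  have "b * B + r < length (grid_prog rows B f)"
    using grid_index_less[OF assms(3,4)] by simp
  then have "exec mem (grid_prog rows B f) ! (length mem + (b * B + r))
               = step (exec mem (grid_prog rows B f)) (grid_prog rows B f ! (b * B + r))"
    using grid_prog_args_less[OF assms(1)] assms(2) by (intro exec_nth_computed) simp_all
  then show ?thesis
    using assms(2) by (simp add: grid_cell_def grid_prog_nth[OF assms(3,4)])
qed

lemma cost_grid_prog_le:
  assumes "\<And>b r. b < rows \<Longrightarrow> r < B \<Longrightarrow> is_arith (f b r) \<Longrightarrow> (b, r) \<in> A" and "finite A"
  shows "cost (grid_prog rows B f) \<le> card A"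
proof -
  let ?T = "{t. t < rows * B \<and> is_arith (f (t div B) (t mod B))}"
  have "cost (grid_prog rows B f) = card ?T"
    unfolding cost_def length_filter_conv_card by (simp add: grid_prog_def cong: conj_cong)
  also have "?T \<subseteq> (\<lambda>(b, r). b * B + r) ` A"
  proof
    fix t assume "t \<in> ?T"
    then have "0 < B"
      by (cases "B = 0") auto
    with \<open>t \<in> ?T\<close> have "(t div B, t mod B) \<in> A"
      using assms(1) by (simp add: less_mult_imp_div_less)
    then show "t \<in> (\<lambda>(b, r). b * B + r) ` A"
      by (force simp: mult.commute[of _ B])
  qed
  then have "card ?T \<le> card ((\<lambda>(b, r). b * B + r) ` A)"
    using assms(2) by (intro card_mono) auto
  also have "\<dots> \<le> card A"
    by (rule card_image_le[OF assms(2)])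
  finally show ?thesis .
qed

definition esym_poly :: "real list \<Rightarrow> real poly" where
  "esym_poly xs = (\<Prod>x\<leftarrow>xs. [:1, x:])"

lemma prod_monom:
  "finite A \<Longrightarrow> (\<Prod>i\<in>A. monom (f i) (d i)) = monom (\<Prod>i\<in>A. f i) (\<Sum>i\<in>A. d i)"
  by (induction A rule: finite_induct) (simp_all add: mult_monom)

lemma coeff_esym_poly: "coeff (esym_poly xs) j = esym j xs"
proof -
  let ?I = "{..<length xs}"
  have "esym_poly xs = (\<Prod>i\<in>?I. monom (xs ! i) 1 + 1)"
    by (simp add: esym_poly_def prod.list_conv_set_nth atLeast0LessThan monom_Suc monom_0 one_pCons)
  also have "\<dots> = (\<Sum>S\<in>Pow ?I. monom (\<Prod>i\<in>S. xs ! i) (card S))"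
    by (simp add: prod_add prod_monom finite_subset)
  finally have "coeff (esym_poly xs) j = (\<Sum>S\<in>Pow ?I. if card S = j then \<Prod>i\<in>S. xs ! i else 0)"
    by (simp add: coeff_sum)
  also have "\<dots> = esym j xs"
    using sum.inter_filter[of "Pow ?I" "\<lambda>S. \<Prod>i\<in>S. xs ! i" "\<lambda>S. card S = j"]
    by (simp add: esym_def Pow_def)
  finally show ?thesis .
qed

lemma coeff_esym_poly_0 [simp]: "coeff (esym_poly xs) 0 = 1"
  by (induction xs) (simp_all add: esym_poly_def coeff_mult_0)

lemma esym_poly_snoc: "esym_poly (xs @ [x]) = esym_poly xs * [:1, x:]"
  by (simp add: esym_poly_def)

lemma esym_poly_del_entry:
  "i < length xs \<Longrightarrow> esym_poly xs = esym_poly (del_entry i xs) * [:1, xs ! i:]"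
  by (subst (1) id_take_nth_drop[of i xs])
    (simp_all add: esym_poly_def del_entry_def mult_ac del: mult_pCons_left mult_pCons_right)

lemma coeff_mult_linear_Suc:
  "coeff (p * [:1, c::real:]) (Suc j) = coeff p (Suc j) + c * coeff p j"
  by (simp add: mult.commute[of p] coeff_pCons_Suc)

definition esym_cell :: "nat \<Rightarrow> nat \<Rightarrow> nat \<Rightarrow> nat \<Rightarrow> nat" where
  "esym_cell n k = grid_cell n (2 * k + 1)"

text \<open>Row \<open>b \<le> n\<close> of the grid holds the coefficients of \<open>esym_poly (take b xs)\<close>, and row
  \<open>n + 1 + i\<close>, obtained from row \<open>n\<close> by dividing out \<open>[:1, xs ! i:]\<close>, those of
  \<open>esym_poly (del_entry i xs)\<close>: coefficient \<open>j \<le> k\<close> sits in column \<open>2j\<close>, and column \<open>2j + 1\<close>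
  holds its product with the entry of \<open>xs\<close> belonging to the row.\<close>
definition esym_del_instr :: "nat \<Rightarrow> nat \<Rightarrow> nat \<Rightarrow> nat \<Rightarrow> instr" where
  "esym_del_instr n k b r =
     (if r = 0 then Const 1
      else if b = 0 then Const 0
      else if b \<le> n then
        (if odd r then Mul (b - 1) (esym_cell n k (b - 1) (r - 1))
         else Add (esym_cell n k (b - 1) r) (esym_cell n k b (r - 1)))
      else
        (if odd r then Mul (b - n - 1) (esym_cell n k b (r - 1))
         else Sub (esym_cell n k n r) (esym_cell n k b (r - 1))))"

definition esym_del_prog :: "nat \<Rightarrow> nat \<Rightarrow> instr list" where
  "esym_del_prog n k = grid_prog (2 * n + 1) (2 * k + 1) (esym_del_instr n k)"

definition esym_del_outs :: "nat \<Rightarrow> nat \<Rightarrow> nat list" where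
  "esym_del_outs n k = map (\<lambda>i. esym_cell n k (n + 1 + i) (2 * k)) [0..<n]"

lemma esym_del_instr_args_less:
  assumes "b < 2 * n + 1" "r < 2 * k + 1" "a \<in> args (esym_del_instr n k b r)"
  shows "a < esym_cell n k b r"
proof -
  have "(b - 1) * (2 * k + 1) < b * (2 * k + 1)" if "0 < b"
    using that by (intro mult_strict_right_mono) simp_all
  moreover have "n * (2 * k + 1) < b * (2 * k + 1)" if "n < b"
    using that by (intro mult_strict_right_mono) simp_all
  ultimately show ?thesis
    using assms by (auto simp: esym_del_instr_def esym_cell_def grid_cell_def split: if_splits)
qed

lemma exec_esym_del_prog_cell:
  "length xs = n \<Longrightarrow> b < 2 * n + 1 \<Longrightarrow> r < 2 * k + 1 \<Longrightarrow>
     exec xs (esym_del_prog n k) ! esym_cell n k b r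
       = step (exec xs (esym_del_prog n k)) (esym_del_instr n k b r)"
  unfolding esym_del_prog_def esym_cell_def
  by (rule exec_grid_prog_cell[OF esym_del_instr_args_less[unfolded esym_cell_def]])

lemma exec_esym_del_prog_prefix_row:
  assumes "length xs = n" "m \<le> n" "j \<le> k"
  shows "exec xs (esym_del_prog n k) ! esym_cell n k m (2 * j) = coeff (esym_poly (take m xs)) j"
  using assms(2,3)
proof (induction m arbitrary: j)
  case 0
  then show ?case
    using assms(1) by (simp add: exec_esym_del_prog_cell esym_del_instr_def esym_poly_def coeff_1)
next
  case (Suc m)
  let ?M = "exec xs (esym_del_prog n k)" and ?Q = "esym_poly (take m xs)"
  show ?case
  proof (cases j)
    case 0
    then show ?thesis
      using Suc.prems assms(1) by (simp add: exec_esym_del_prog_cell esym_del_instr_def)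
  next
    case (Suc i)
    have input: "?M ! m = xs ! m"
      using Suc.prems assms(1) by (simp add: exec_nth_input)
    have "?M ! esym_cell n k (Suc m) (2 * i + 1) = xs ! m * coeff ?Q i"
      using Suc.prems Suc.IH[of i] \<open>j = Suc i\<close> assms(1) input
      by (simp add: exec_esym_del_prog_cell esym_del_instr_def)
    then have "?M ! esym_cell n k (Suc m) (2 * j) = coeff ?Q (Suc i) + xs ! m * coeff ?Q i"
      using Suc.prems Suc.IH[of j] \<open>j = Suc i\<close> assms(1)
      by (simp add: exec_esym_del_prog_cell esym_del_instr_def)
    also have "\<dots> = coeff (esym_poly (take (Suc m) xs)) j"
      using Suc.prems assms(1) \<open>j = Suc i\<close>
      by (simp add: take_Suc_conv_app_nth esym_poly_snoc coeff_mult_linear_Suc)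
    finally show ?thesis .
  qed
qed

lemma exec_esym_del_prog_deletion_row:
  assumes "length xs = n" "i < n" "j \<le> k"
  shows "exec xs (esym_del_prog n k) ! esym_cell n k (n + 1 + i) (2 * j)
           = coeff (esym_poly (del_entry i xs)) j"
  using assms(3)
proof (induction j)
  case 0
  then show ?case
    using assms by (simp add: exec_esym_del_prog_cell esym_del_instr_def)
next
  case (Suc j)
  let ?M = "exec xs (esym_del_prog n k)" and ?Q = "esym_poly (del_entry i xs)"
  have input: "?M ! i = xs ! i"
    using assms by (simp add: exec_nth_input)
  have "?M ! esym_cell n k (n + 1 + i) (2 * j + 1) = xs ! i * coeff ?Q j"
    using Suc assms input by (simp add: exec_esym_del_prog_cell esym_del_instr_def)
  moreover have "?M ! esym_cell n k n (2 * Suc j) = coeff (esym_poly xs) (Suc j)"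
    using exec_esym_del_prog_prefix_row[OF assms(1) order_refl Suc.prems] assms(1) by simp
  ultimately have "?M ! esym_cell n k (n + 1 + i) (2 * Suc j)
                    = coeff (esym_poly xs) (Suc j) - xs ! i * coeff ?Q j"
    using Suc.prems assms by (simp add: exec_esym_del_prog_cell esym_del_instr_def)
  also have "\<dots> = coeff ?Q (Suc j)"
    using esym_poly_del_entry[of i xs] assms by (simp add: coeff_mult_linear_Suc)
  finally show ?case .
qed

lemma esym_del_prog_computes:
  "computes n (esym_del_prog n k) (esym_del_outs n k) (\<lambda>xs. map (\<lambda>i. esym k (del_entry i xs)) [0..<n])"
  unfolding computes_def wf_slp_def
proof (intro conjI allI impI ballI)
  show "\<And>j a. j < length (esym_del_prog n k) \<Longrightarrow> a \<in> args (esym_del_prog n k ! j) \<Longrightarrow> a < n + j"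
    using grid_prog_args_less[OF esym_del_instr_args_less[unfolded esym_cell_def]]
    unfolding esym_del_prog_def by blast
  show "c < n + length (esym_del_prog n k)" if "c \<in> set (esym_del_outs n k)" for c
  proof -
    from that obtain i where "i < n" and c: "c = esym_cell n k (n + 1 + i) (2 * k)"
      unfolding esym_del_outs_def by auto
    have "(n + 1 + i) * (2 * k + 1) + 2 * k < (2 * n + 1) * (2 * k + 1)"
      by (rule grid_index_less) (use \<open>i < n\<close> in simp_all)
    then show ?thesis
      by (simp add: c esym_cell_def grid_cell_def esym_del_prog_def)
  qed
  show "map (\<lambda>c. exec xs (esym_del_prog n k) ! c) (esym_del_outs n k)
          = map (\<lambda>i. esym k (del_entry i xs)) [0..<n]" if "length xs = n" for xs
    using exec_esym_del_prog_deletion_row[OF that _ order_refl]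
    by (simp add: esym_del_outs_def coeff_esym_poly)
qed

lemma cost_esym_del_prog: "cost (esym_del_prog n k) \<le> 4 * k * n"
proof -
  have "cost (esym_del_prog n k) \<le> card ({1..2 * n} \<times> {1..2 * k})"
    unfolding esym_del_prog_def
    by (rule cost_grid_prog_le) (auto simp: esym_del_instr_def split: if_splits)
  then show ?thesis
    by (simp add: mult_ac)
qed

theorem mainTheorem15:
  shows "\<exists>C::real. \<forall>n k::nat. k \<le> n - 1 \<longrightarrow>
           (\<exists>p out. computes n p out
                      (\<lambda>xs. map (\<lambda>i. esym k (del_entry i xs)) [0..<n])
                    \<and> real (cost p) \<le> C * real k * real n * log 2 (real n))"
proof (intro exI[of _ 4] allI impI)
  fix n k :: nat
  assume "k \<le> n - 1"
  have cost_le: "real (cost (esym_del_prog n k)) \<le> 4 * real k * real n"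
    using cost_esym_del_prog[of n k] by (metis of_nat_le_iff of_nat_mult of_nat_numeral)
  have "real (cost (esym_del_prog n k)) \<le> 4 * real k * real n * log 2 (real n)"
  proof (cases "k = 0")
    case True
    then show ?thesis
      using cost_le by simp
  next
    case False
    then have "1 \<le> log 2 (real n)"
      using \<open>k \<le> n - 1\<close> by simp
    then have "4 * real k * real n * 1 \<le> 4 * real k * real n * log 2 (real n)"
      by (intro mult_left_mono) simp_all
    then show ?thesis
      using cost_le by simp
  qed
  then show "\<exists>p out. computes n p out (\<lambda>xs. map (\<lambda>i. esym k (del_entry i xs)) [0..<n])
               \<and> real (cost p) \<le> 4 * real k * real n * log 2 (real n)"
    using esym_del_prog_computes by blast
qed

end
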